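(* There exists a full amicable orthogonal design $AOD\big(168;\ 4,164;\ 4,164\big)$.
   Context: An orthogonal design $OD(m;c_1,\ldots,c_k)$ is an $m\times m$ matrix $X$ with entries from $\{0,\pm x_1,\ldots,\pm x_k\}$, where $x_1,\ldots,x_k$ are commuting indeterminates, such that $XX^{\rm T}=(\sum_j c_jx_j^2)I_m$. An amicable orthogonal design $AOD(m;c_1,\ldots,c_k;d_1,\ldots,d_\ell)$ is a pair $(X;Y)$ where $X$ is an $OD(m;c_1,\ldots,c_k)$ in indeterminates $x_1,\ldots,x_k$, $Y$ is an $OD(m;d_1,\ldots,d_\ell)$ in indeterminates $y_1,\ldots,y_\ell$ disjoint from the $x_i$, and $XY^{\rm T}=YX^{\rm T}$. It is full if neither $X$ nor $Y$ has a zero entry. *)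

theory Defs
  imports Complex_Main
begin

text \<open>A design matrix of order m is given entrywise as a pair (s, j): the entry is
  s * x_j with s in {-1,0,1} and j an index of an indeterminate (0-based).
  Rows and columns are indexed by {0..<m}.\<close>

type_synonym design = "nat \<Rightarrow> nat \<Rightarrow> int \<times> nat"

definition is_design :: "nat \<Rightarrow> nat \<Rightarrow> design \<Rightarrow> bool" where
  "is_design m k X \<longleftrightarrow>
     (\<forall>i<m. \<forall>j<m. fst (X i j) \<in> {-1, 0, 1} \<and> snd (X i j) < k)"

definition entry_val :: "design \<Rightarrow> (nat \<Rightarrow> real) \<Rightarrow> nat \<Rightarrow> nat \<Rightarrow> real" where
  "entry_val X x i j = real_of_int (fst (X i j)) * x (snd (X i j))"

text \<open>Orthogonal design OD(m; c_1,...,c_k): X X^T = (sum_j c_j x_j^2) I_m as an identity in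
  commuting indeterminates, expressed as an identity for all real values of the indeterminates.\<close>

definition OD :: "nat \<Rightarrow> nat list \<Rightarrow> design \<Rightarrow> bool" where
  "OD m c X \<longleftrightarrow> is_design m (length c) X \<and>
     (\<forall>x :: nat \<Rightarrow> real. \<forall>i<m. \<forall>l<m.
        (\<Sum>t<m. entry_val X x i t * entry_val X x l t) =
        (if i = l then (\<Sum>j<length c. real (c ! j) * (x j)\<^sup>2) else 0))"

definition AOD :: "nat \<Rightarrow> nat list \<Rightarrow> nat list \<Rightarrow> design \<Rightarrow> design \<Rightarrow> bool" where
  "AOD m c d X Y \<longleftrightarrow> OD m c X \<and> OD m d Y \<and>
     (\<forall>(x :: nat \<Rightarrow> real) (y :: nat \<Rightarrow> real). \<forall>i<m. \<forall>l<m.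
        (\<Sum>t<m. entry_val X x i t * entry_val Y y l t) =
        (\<Sum>t<m. entry_val Y y i t * entry_val X x l t))"

definition full_design :: "nat \<Rightarrow> design \<Rightarrow> bool" where
  "full_design m X \<longleftrightarrow> (\<forall>i<m. \<forall>j<m. fst (X i j) \<noteq> 0)"

end

theory Submission
  imports Defs "HOL-Analysis.Cartesian_Euclidean_Space"
begin

text \<open>Let W be a symmetric conference matrix of order 42 (zero diagonal, entries \<open>\<plusminus>1\<close>
  elsewhere, \<open>W W\<^sup>T = 41 I\<close>); Paley's construction gives one from the quadratic character
  modulo 41. Let A, B, C, D be \<open>\<plusminus>1\<close> matrices of order 4 with \<open>A A\<^sup>T = B B\<^sup>T = C C\<^sup>T = D D\<^sup>T = 4 I\<close>,
  \<open>A B\<^sup>T = - B A\<^sup>T\<close>, \<open>C D\<^sup>T = - D C\<^sup>T\<close>, and \<open>A C\<^sup>T, A D\<^sup>T, B C\<^sup>T, B D\<^sup>T\<close> symmetric. Then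
  \<open>X = I \<otimes> A x\<^sub>0 + W \<otimes> B x\<^sub>1\<close> and \<open>Y = I \<otimes> C y\<^sub>0 + W \<otimes> D y\<^sub>1\<close> have no zero entries, and the
  mixed-product rule \<open>(P \<otimes> Q)(R \<otimes> S)\<^sup>T = P R\<^sup>T \<otimes> Q S\<^sup>T\<close> gives
  \<open>X X\<^sup>T = (4 x\<^sub>0\<^sup>2 + 164 x\<^sub>1\<^sup>2) I\<close>, the same for Y, and \<open>X Y\<^sup>T = Y X\<^sup>T\<close>.\<close>

definition row_inner :: "nat \<Rightarrow> (nat \<Rightarrow> nat \<Rightarrow> 'a::comm_semiring_1) \<Rightarrow> (nat \<Rightarrow> nat \<Rightarrow> 'a) \<Rightarrow> nat \<Rightarrow> nat \<Rightarrow> 'a"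
  where "row_inner n A B i l = (\<Sum>t<n. A i t * B l t)"

definition kron :: "nat \<Rightarrow> (nat \<Rightarrow> nat \<Rightarrow> 'a::times) \<Rightarrow> (nat \<Rightarrow> nat \<Rightarrow> 'a) \<Rightarrow> nat \<Rightarrow> nat \<Rightarrow> 'a"
  where "kron m A B i j = A (i div m) (j div m) * B (i mod m) (j mod m)"

lemma row_inner_kron:
  fixes A C :: "nat \<Rightarrow> nat \<Rightarrow> 'a::comm_semiring_1"
  assumes "0 < m"
  shows "row_inner (n * m) (kron m A B) (kron m C D) i l =
         row_inner n A C (i div m) (l div m) * row_inner m B D (i mod m) (l mod m)"
proof -
  have "row_inner (n * m) (kron m A B) (kron m C D) i l =
        (\<Sum>c<n. \<Sum>r<m. (A (i div m) c * C (l div m) c) * (B (i mod m) r * D (l mod m) r))"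
    unfolding row_inner_def sum_mult_product kron_def
    using assms by (intro sum.cong refl) (simp add: ac_simps)
  then show ?thesis
    by (simp add: row_inner_def sum_product)
qed

lemma row_inner_id_left:
  "a < n \<Longrightarrow> row_inner n (\<lambda>i j. of_bool (i = j)) C a b = C b a"
  by (simp add: row_inner_def if_distrib cong: if_cong)

lemma row_inner_id_right:
  "b < n \<Longrightarrow> row_inner n C (\<lambda>i j. of_bool (i = j)) a b = C a b"
  by (simp add: row_inner_def if_distrib cong: if_cong)

text \<open>The design with entries \<open>P x\<^sub>0 + Q x\<^sub>1\<close>; this reading is faithful only where the
  supports of P and Q are disjoint.\<close>

definition two_var_design :: "(nat \<Rightarrow> nat \<Rightarrow> int) \<Rightarrow> (nat \<Rightarrow> nat \<Rightarrow> int) \<Rightarrow> design"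
  where "two_var_design P Q i j = (if Q i j = 0 then (P i j, 0) else (Q i j, 1))"

lemma entry_val_two_var_design:
  "P i j = 0 \<or> Q i j = 0 \<Longrightarrow>
   entry_val (two_var_design P Q) x i j = of_int (P i j) * x 0 + of_int (Q i j) * x 1"
  by (auto simp: entry_val_def two_var_design_def)

lemma row_products_two_var_design:
  assumes "\<And>t. t < N \<Longrightarrow> P i t = 0 \<or> Q i t = 0" "\<And>t. t < N \<Longrightarrow> R l t = 0 \<or> S l t = 0"
  shows "(\<Sum>t<N. entry_val (two_var_design P Q) x i t * entry_val (two_var_design R S) y l t) =
           x 0 * y 0 * of_int (row_inner N P R i l) + x 0 * y 1 * of_int (row_inner N P S i l)
         + x 1 * y 0 * of_int (row_inner N Q R i l) + x 1 * y 1 * of_int (row_inner N Q S i l)"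
proof -
  have "(\<Sum>t<N. entry_val (two_var_design P Q) x i t * entry_val (two_var_design R S) y l t) =
        (\<Sum>t<N. x 0 * y 0 * of_int (P i t * R l t) + x 0 * y 1 * of_int (P i t * S l t)
              + x 1 * y 0 * of_int (Q i t * R l t) + x 1 * y 1 * of_int (Q i t * S l t))"
    using assms by (intro sum.cong refl) (simp add: entry_val_two_var_design algebra_simps)
  then show ?thesis
    by (simp add: row_inner_def sum.distrib sum_distrib_left)
qed

definition kron_design :: "nat \<Rightarrow> (nat \<Rightarrow> nat \<Rightarrow> int) \<Rightarrow> (nat \<Rightarrow> nat \<Rightarrow> int) \<Rightarrow> (nat \<Rightarrow> nat \<Rightarrow> int) \<Rightarrow> design"
  where "kron_design m W A B = two_var_design (kron m (\<lambda>i j. of_bool (i = j)) A) (kron m W B)"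

lemma row_products_kron_design:
  assumes "\<And>a. a < n \<Longrightarrow> W a a = 0" "0 < m" "i < n * m" "l < n * m"
  shows "(\<Sum>t<n * m. entry_val (kron_design m W A B) x i t * entry_val (kron_design m W C D) y l t) =
           x 0 * y 0 * of_int (of_bool (i div m = l div m) * row_inner m A C (i mod m) (l mod m))
         + x 0 * y 1 * of_int (W (l div m) (i div m) * row_inner m A D (i mod m) (l mod m))
         + x 1 * y 0 * of_int (W (i div m) (l div m) * row_inner m B C (i mod m) (l mod m))
         + x 1 * y 1 * of_int (row_inner n W W (i div m) (l div m) * row_inner m B D (i mod m) (l mod m))"
proof -
  have div_less: "i div m < n" "l div m < n"
    using assms(2-4) by (simp_all add: less_mult_imp_div_less)
  have disjoint: "kron m (\<lambda>i j. of_bool (i = j)) F k t = 0 \<or> kron m W G k t = 0"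
    if "k div m < n" for F G :: "nat \<Rightarrow> nat \<Rightarrow> int" and k t
    using assms(1) that by (auto simp: kron_def)
  show ?thesis
    unfolding kron_design_def
    using div_less
    by (subst row_products_two_var_design)
       (auto simp: disjoint row_inner_kron[OF assms(2)] row_inner_id_left row_inner_id_right)
qed

definition hadamard :: "nat \<Rightarrow> (nat \<Rightarrow> nat \<Rightarrow> int) \<Rightarrow> bool" where
  "hadamard m H \<longleftrightarrow>
     (\<forall>i<m. \<forall>j<m. H i j \<in> {-1, 1} \<and> row_inner m H H i j = of_bool (i = j) * int m)"

definition symmetric_conference :: "nat \<Rightarrow> (nat \<Rightarrow> nat \<Rightarrow> int) \<Rightarrow> bool" where
  "symmetric_conference n W \<longleftrightarrow>
     (\<forall>i<n. \<forall>j<n. W j i = W i j \<and> (if i = j then W i j = 0 else W i j \<in> {-1, 1})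
                 \<and> row_inner n W W i j = of_bool (i = j) * (int n - 1))"

definition amicable_pair :: "nat \<Rightarrow> (nat \<Rightarrow> nat \<Rightarrow> int) \<Rightarrow> (nat \<Rightarrow> nat \<Rightarrow> int) \<Rightarrow> bool" where
  "amicable_pair m A B \<longleftrightarrow> (\<forall>i<m. \<forall>j<m. row_inner m A B i j = row_inner m B A i j)"

definition anti_amicable_pair :: "nat \<Rightarrow> (nat \<Rightarrow> nat \<Rightarrow> int) \<Rightarrow> (nat \<Rightarrow> nat \<Rightarrow> int) \<Rightarrow> bool" where
  "anti_amicable_pair m A B \<longleftrightarrow> (\<forall>i<m. \<forall>j<m. row_inner m A B i j = - row_inner m B A i j)"

lemma kron_design_entry:
  assumes W: "symmetric_conference n W" and A: "hadamard m A" and B: "hadamard m B"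
    and "0 < m" "i < n * m" "j < n * m"
  shows "fst (kron_design m W A B i j) \<in> {-1, 1}" "snd (kron_design m W A B i j) < 2"
proof -
  have idx: "i div m < n" "j div m < n" "i mod m < m" "j mod m < m"
    using assms(4-6) by (simp_all add: less_mult_imp_div_less)
  have "A (i mod m) (j mod m) \<in> {-1, 1}" "B (i mod m) (j mod m) \<in> {-1, 1}"
    using A B idx by (auto simp: hadamard_def)
  moreover have "W (i div m) (j div m) \<in> {-1, 1}" if "i div m \<noteq> j div m"
    using W idx that unfolding symmetric_conference_def by metis
  moreover have "W (i div m) (i div m) = 0"
    using W idx unfolding symmetric_conference_def by metis
  ultimately show "fst (kron_design m W A B i j) \<in> {-1, 1}" "snd (kron_design m W A B i j) < 2"
    by (auto simp: kron_design_def two_var_design_def kron_def)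
qed

lemma full_design_kron_design:
  assumes "symmetric_conference n W" "hadamard m A" "hadamard m B" "0 < m"
  shows "full_design (n * m) (kron_design m W A B)"
  using kron_design_entry(1)[OF assms] by (fastforce simp: full_design_def)

lemma OD_kron_design:
  assumes W: "symmetric_conference n W" and "0 < m"
    and A: "hadamard m A" and B: "hadamard m B" and AB: "anti_amicable_pair m A B"
  shows "OD (n * m) [m, m * (n - 1)] (kron_design m W A B)"
  unfolding OD_def
proof (intro conjI allI impI)
  show "is_design (n * m) (length [m, m * (n - 1)]) (kron_design m W A B)"
    using kron_design_entry[OF W A B \<open>0 < m\<close>] by (auto simp: is_design_def numeral_2_eq_2)
  fix x :: "nat \<Rightarrow> real" and i l assume il: "i < n * m" "l < n * m"
  then have idx: "i div m < n" "l div m < n" "i mod m < m" "l mod m < m"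
    using \<open>0 < m\<close> by (simp_all add: less_mult_imp_div_less)
  have diag: "\<And>c. c < n \<Longrightarrow> W c c = 0"
    using W unfolding symmetric_conference_def by metis
  have WW: "row_inner n W W (i div m) (l div m) = of_bool (i div m = l div m) * (int n - 1)"
    and sym: "W (l div m) (i div m) = W (i div m) (l div m)"
    using W idx by (simp_all add: symmetric_conference_def)
  have AA: "row_inner m A A (i mod m) (l mod m) = of_bool (i mod m = l mod m) * int m"
    and BB: "row_inner m B B (i mod m) (l mod m) = of_bool (i mod m = l mod m) * int m"
    using A B idx by (simp_all add: hadamard_def)
  have BA: "row_inner m B A (i mod m) (l mod m) = - row_inner m A B (i mod m) (l mod m)"
    using AB idx by (simp add: anti_amicable_pair_def)
  have delta: "i = l \<or> i div m \<noteq> l div m \<or> i mod m \<noteq> l mod m"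
    by (metis div_mult_mod_eq)
  have "(\<Sum>t<n * m. entry_val (kron_design m W A B) x i t * entry_val (kron_design m W A B) x l t)
      = of_int (of_bool (i = l)) * (real m * (x 0)\<^sup>2 + real m * (real n - 1) * (x 1)\<^sup>2)"
    using delta
    by (simp only: row_products_kron_design[OF diag \<open>0 < m\<close> il] AA BB BA WW sym)
       (elim disjE; auto simp: algebra_simps power2_eq_square)
  moreover have "(\<Sum>j<length [m, m * (n - 1)]. real ([m, m * (n - 1)] ! j) * (x j)\<^sup>2)
      = real m * (x 0)\<^sup>2 + real m * (real n - 1) * (x 1)\<^sup>2"
    using idx(1) by (simp add: numeral_2_eq_2 of_nat_diff)
  ultimately show "(\<Sum>t<n * m. entry_val (kron_design m W A B) x i t * entry_val (kron_design m W A B) x l t) =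
        (if i = l then \<Sum>j<length [m, m * (n - 1)]. real ([m, m * (n - 1)] ! j) * (x j)\<^sup>2 else 0)"
    by (simp only:) simp
qed

lemma sum_shift_periodic:
  fixes f :: "int \<Rightarrow> 'a::cancel_comm_monoid_add"
  assumes per: "\<And>k. f (k mod int q) = f k" and "0 < q"
  shows "(\<Sum>k<q. f (int k + s)) = (\<Sum>k<q. f (int k))"
proof -
  have shift_nat: "(\<Sum>k<q. f (int k + int n)) = (\<Sum>k<q. f (int k))" for n
  proof (induction n)
    case (Suc n)
    have "f (int q + int n) = f (int n)"
      using per[of "int q + int n"] per[of "int n"] by simp
    then have "(\<Sum>k<q. f (int (Suc k) + int n)) = (\<Sum>k<q. f (int k + int n))"
      using sum.lessThan_Suc_shift[of "\<lambda>k. f (int k + int n)" q]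
            sum.lessThan_Suc[of "\<lambda>k. f (int k + int n)" q]
      by (simp add: add.commute)
    then show ?case
      using Suc.IH by (simp add: ac_simps)
  qed simp
  have "f (int k + s) = f (int k + int (nat (s mod int q)))" for k
    using assms per[of "int k + s"] per[of "int k + s mod int q"] by (simp add: mod_add_right_eq)
  then show ?thesis
    using shift_nat[of "nat (s mod int q)"] by simp
qed

lemma not_dvd_diff_less:
  "i < q \<Longrightarrow> j < q \<Longrightarrow> i \<noteq> j \<Longrightarrow> \<not> int q dvd (int i - int j)"
  using dvd_imp_le_int[of "int i - int j" "int q"] by auto

text \<open>The bordered Paley matrix: index 0 is the border, index \<open>a > 0\<close> stands for the residue
  \<open>a - 1\<close> modulo q.\<close>

definition paley :: "nat \<Rightarrow> (int \<Rightarrow> int) \<Rightarrow> nat \<Rightarrow> nat \<Rightarrow> int" where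
  "paley q chi a b = (if a = 0 then of_bool (b \<noteq> 0) else if b = 0 then 1 else chi (int b - int a))"

text \<open>What Paley's construction needs of the quadratic character modulo a prime
  \<open>q \<equiv> 1 (mod 4)\<close>.\<close>

locale paley_character =
  fixes q :: nat and chi :: "int \<Rightarrow> int"
  assumes q_pos: "0 < q"
    and periodic: "\<And>k. chi (k mod int q) = chi k"
    and chi_zero: "chi 0 = 0"
    and chi_unit: "\<And>k. 0 < k \<Longrightarrow> k < q \<Longrightarrow> chi (int k) \<in> {-1, 1}"
    and chi_even: "\<And>k. k < q \<Longrightarrow> chi (int q - int k) = chi (int k)"
    and chi_balanced: "(\<Sum>k<q. chi (int k)) = 0"
    and chi_autocorr: "\<And>d. 0 < d \<Longrightarrow> d < q \<Longrightarrow> (\<Sum>k<q. chi (int k) * chi (int k + int d)) = -1"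
begin

lemma chi_residue: "chi k = chi (int (nat (k mod int q)))" "nat (k mod int q) < q"
  using periodic[of k] q_pos by (simp_all add: nat_less_iff)

lemma chi_add_mod: "chi (k mod int q + d) = chi (k + d)"
  using periodic[of "k mod int q + d"] periodic[of "k + d"] by (simp add: mod_add_left_eq)

lemma chi_nonzero: "\<not> int q dvd k \<Longrightarrow> chi k \<in> {-1, 1}"
  using chi_unit[of "nat (k mod int q)"] chi_residue[of k] q_pos
  by (simp add: dvd_eq_mod_eq_0 order_le_neq_trans)

lemma chi_minus: "chi (- k) = chi k"
proof -
  have "(- k) mod int q = (int q - int (nat (k mod int q))) mod int q"
    using q_pos by (simp add: mod_diff_right_eq mod_minus_eq)
  then show ?thesis
    using periodic[of "- k"] periodic[of "int q - int (nat (k mod int q))"]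
      chi_even[OF chi_residue(2)] chi_residue(1)[of k]
    by simp
qed

lemma sum_chi_squares: "(\<Sum>k<q. chi (int k) * chi (int k)) = int q - 1"
proof -
  obtain p where "q = Suc p"
    using q_pos gr0_implies_Suc by blast
  moreover have "chi (int (Suc k)) * chi (int (Suc k)) = 1" if "k < p" for k
    using chi_unit[of "Suc k"] that \<open>q = Suc p\<close> by auto
  ultimately show ?thesis
    by (simp only: sum.lessThan_Suc_shift) (simp add: chi_zero)
qed

lemma autocorrelation:
  "(\<Sum>k<q. chi (int k) * chi (int k + d)) = (if int q dvd d then int q - 1 else -1)"
proof -
  have "chi (int k + d) = chi (int k + int (nat (d mod int q)))" for k
    using periodic[of "int k + d"] periodic[of "int k + int (nat (d mod int q))"] q_pos
    by (simp add: mod_add_right_eq)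
  moreover have "0 < nat (d mod int q)" if "\<not> int q dvd d"
    using that q_pos by (simp add: dvd_eq_mod_eq_0 order_le_neq_trans)
  ultimately show ?thesis
    using chi_autocorr[OF _ chi_residue(2)] sum_chi_squares by (simp add: dvd_eq_mod_eq_0)
qed

lemma sum_shift:
  fixes f :: "int \<Rightarrow> int"
  assumes "\<And>k. f (k mod int q) = f k"
  shows "(\<Sum>c<q. f (int c - int i)) = (\<Sum>c<q. f (int c))"
  using sum_shift_periodic[of f q "- int i"] assms q_pos by simp

lemma row_inner_paley_split:
  "row_inner (Suc q) (paley q chi) (paley q chi) a b
     = of_bool (a \<noteq> 0 \<and> b \<noteq> 0) + (\<Sum>c<q. paley q chi a (Suc c) * paley q chi b (Suc c))"
  by (simp only: row_inner_def sum.lessThan_Suc_shift) (simp add: paley_def)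

lemma row_inner_paley_border: "row_inner (Suc q) (paley q chi) (paley q chi) 0 (Suc j) = 0"
proof -
  have "(\<Sum>c<q. chi (int c - int j)) = 0"
    using sum_shift[of chi j] periodic chi_balanced by simp
  then show ?thesis
    by (simp add: row_inner_paley_split paley_def)
qed

lemma row_inner_paley_core:
  assumes "i < q" "j < q"
  shows "row_inner (Suc q) (paley q chi) (paley q chi) (Suc i) (Suc j) = of_bool (i = j) * int q"
proof -
  have "(\<Sum>c<q. chi (int c - int i) * chi (int c - int j))
      = (\<Sum>k<q. chi (int k) * chi (int k + (int i - int j)))"
    using sum_shift[of "\<lambda>k. chi k * chi (k + (int i - int j))" i] by (simp add: periodic chi_add_mod)
  then show ?thesis
    using autocorrelation[of "int i - int j"] not_dvd_diff_less[OF assms]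
    by (cases "i = j") (simp_all add: row_inner_paley_split paley_def)
qed

lemma row_inner_paley:
  assumes "a < Suc q" "b < Suc q"
  shows "row_inner (Suc q) (paley q chi) (paley q chi) a b = of_bool (a = b) * (int (Suc q) - 1)"
proof (cases a; cases b)
  fix i assume "a = Suc i" "b = 0"
  then show ?thesis
    using row_inner_paley_border[of i] by (simp add: row_inner_def mult.commute)
qed (use assms row_inner_paley_split row_inner_paley_border row_inner_paley_core
     in \<open>simp_all add: paley_def\<close>)

lemma paley_entry:
  assumes "a < Suc q" "b < Suc q"
  shows "paley q chi b a = paley q chi a b \<and>
    (if a = b then paley q chi a b = 0 else paley q chi a b \<in> {-1, 1})"
proof (cases a; cases b)
  fix i j assume "a = Suc i" "b = Suc j"
  then show ?thesis
    using assms chi_minus[of "int j - int i"] chi_nonzero[OF not_dvd_diff_less[of j q i]] chi_zero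
    by (simp add: paley_def)
qed (simp_all add: paley_def)

theorem symmetric_conference_paley: "symmetric_conference (Suc q) (paley q chi)"
  unfolding symmetric_conference_def using row_inner_paley paley_entry by blast

end

lemma AOD_kron_design:
  assumes W: "symmetric_conference n W" and "0 < m"
    and A: "hadamard m A" and B: "hadamard m B" and C: "hadamard m C" and D: "hadamard m D"
    and AB: "anti_amicable_pair m A B" and CD: "anti_amicable_pair m C D"
    and AC: "amicable_pair m A C" and AD: "amicable_pair m A D"
    and BC: "amicable_pair m B C" and BD: "amicable_pair m B D"
  shows "AOD (n * m) [m, m * (n - 1)] [m, m * (n - 1)] (kron_design m W A B) (kron_design m W C D)"
  unfolding AOD_def
proof (intro conjI allI impI)
  show "OD (n * m) [m, m * (n - 1)] (kron_design m W A B)"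
    using W \<open>0 < m\<close> A B AB by (rule OD_kron_design)
  show "OD (n * m) [m, m * (n - 1)] (kron_design m W C D)"
    using W \<open>0 < m\<close> C D CD by (rule OD_kron_design)
  fix x y :: "nat \<Rightarrow> real" and i l assume il: "i < n * m" "l < n * m"
  then have idx: "i div m < n" "l div m < n" "i mod m < m" "l mod m < m"
    using \<open>0 < m\<close> by (simp_all add: less_mult_imp_div_less)
  have diag: "\<And>c. c < n \<Longrightarrow> W c c = 0"
    using W unfolding symmetric_conference_def by metis
  have sym: "W (l div m) (i div m) = W (i div m) (l div m)"
    using W idx by (simp add: symmetric_conference_def)
  have "row_inner m C A (i mod m) (l mod m) = row_inner m A C (i mod m) (l mod m)"
    "row_inner m D A (i mod m) (l mod m) = row_inner m A D (i mod m) (l mod m)"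
    "row_inner m C B (i mod m) (l mod m) = row_inner m B C (i mod m) (l mod m)"
    "row_inner m D B (i mod m) (l mod m) = row_inner m B D (i mod m) (l mod m)"
    using AC AD BC BD idx by (simp_all add: amicable_pair_def)
  then show "(\<Sum>t<n * m. entry_val (kron_design m W A B) x i t * entry_val (kron_design m W C D) y l t) =
             (\<Sum>t<n * m. entry_val (kron_design m W C D) y i t * entry_val (kron_design m W A B) x l t)"
    by (simp only: row_products_kron_design[OF diag \<open>0 < m\<close> il] sym) (simp add: algebra_simps)
qed

lemma sum_lessThan_eq_sum_list: "(\<Sum>i<n. f i) = sum_list (map f [0..<n])"
  by (simp add: atLeast0LessThan[symmetric] sum_set_upt_conv_sum_list_nat[symmetric])

lemma all_lessThan_eq_list_all: "(\<forall>i<n. P i) \<longleftrightarrow> list_all P [0..<n]"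
  by (auto simp: list_all_iff)

text \<open>The quadratic character modulo 41, tabulated on the residues 0, ..., 40.\<close>

definition legendre41 :: "int \<Rightarrow> int" where
  "legendre41 k = [0, 1, 1, -1, 1, 1, -1, -1, 1, 1, 1, -1, -1, -1, -1, -1, 1, -1, 1, -1,
     1, 1, -1, 1, -1, 1, -1, -1, -1, -1, -1, 1, 1, 1, -1, -1, 1, 1, -1, 1, 1] ! nat (k mod 41)"

lemma paley_character_legendre41: "paley_character 41 legendre41"
proof
  have unit: "\<forall>k<41. 0 < k \<longrightarrow> legendre41 (int k) \<in> {-1, 1}"
    and even: "\<forall>k<41. legendre41 (41 - int k) = legendre41 (int k)"
    and autocorr: "\<forall>d<41. 0 < d \<longrightarrow> (\<Sum>k<41. legendre41 (int k) * legendre41 (int k + int d)) = -1"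
    by (simp_all only: all_lessThan_eq_list_all sum_lessThan_eq_sum_list; code_simp)+
  show "legendre41 (int k) \<in> {-1, 1}" if "0 < k" "k < 41" for k
    using unit that by blast
  show "legendre41 (int 41 - int k) = legendre41 (int k)" if "k < 41" for k
    using even that by simp
  show "(\<Sum>k<41. legendre41 (int k) * legendre41 (int k + int d)) = -1" if "0 < d" "d < 41" for d
    using autocorr that by blast
  show "(\<Sum>k<41. legendre41 (int k)) = 0"
    by (simp only: sum_lessThan_eq_sum_list) code_simp
qed (simp_all add: legendre41_def)

definition of_rows :: "int list list \<Rightarrow> nat \<Rightarrow> nat \<Rightarrow> int" where
  "of_rows rs i j = rs ! i ! j"

definition A4 :: "nat \<Rightarrow> nat \<Rightarrow> int" where
  "A4 = of_rows [[1, 1, 1, 1], [1, 1, -1, -1], [1, -1, 1, -1], [1, -1, -1, 1]]"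
definition B4 :: "nat \<Rightarrow> nat \<Rightarrow> int" where
  "B4 = of_rows [[1, 1, -1, -1], [-1, -1, -1, -1], [1, -1, -1, 1], [-1, 1, -1, 1]]"
definition C4 :: "nat \<Rightarrow> nat \<Rightarrow> int" where
  "C4 = of_rows [[1, 1, 1, 1], [-1, -1, 1, 1], [1, -1, 1, -1], [-1, 1, 1, -1]]"
definition D4 :: "nat \<Rightarrow> nat \<Rightarrow> int" where
  "D4 = of_rows [[1, 1, -1, -1], [1, 1, 1, 1], [1, -1, -1, 1], [1, -1, 1, -1]]"

lemma hadamard_4:
  "hadamard 4 A4" "hadamard 4 B4" "hadamard 4 C4" "hadamard 4 D4"
  unfolding hadamard_def row_inner_def all_lessThan_eq_list_all sum_lessThan_eq_sum_list
    A4_def B4_def C4_def D4_def of_rows_def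
  by code_simp+

lemma amicable_pairs_4:
  "anti_amicable_pair 4 A4 B4" "anti_amicable_pair 4 C4 D4"
  "amicable_pair 4 A4 C4" "amicable_pair 4 A4 D4" "amicable_pair 4 B4 C4" "amicable_pair 4 B4 D4"
  unfolding amicable_pair_def anti_amicable_pair_def row_inner_def all_lessThan_eq_list_all
    sum_lessThan_eq_sum_list A4_def B4_def C4_def D4_def of_rows_def
  by code_simp+

theorem mainTheorem5:
  shows "\<exists>X Y. AOD 168 [4, 164] [4, 164] X Y \<and> full_design 168 X \<and> full_design 168 Y"
proof -
  let ?W = "paley 41 legendre41"
  have W: "symmetric_conference 42 ?W"
    using paley_character.symmetric_conference_paley[OF paley_character_legendre41] by simp
  have "AOD (42 * 4) [4, 4 * (42 - 1)] [4, 4 * (42 - 1)] (kron_design 4 ?W A4 B4) (kron_design 4 ?W C4 D4)"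
    using W _ hadamard_4 amicable_pairs_4 by (rule AOD_kron_design) simp
  moreover have "full_design (42 * 4) (kron_design 4 ?W A4 B4)"
    by (rule full_design_kron_design[OF W hadamard_4(1,2)]) simp
  moreover have "full_design (42 * 4) (kron_design 4 ?W C4 D4)"
    by (rule full_design_kron_design[OF W hadamard_4(3,4)]) simp
  moreover have "(42::nat) * 4 = 168" "4 * (42 - 1) = (164::nat)"
    by simp_all
  ultimately show ?thesis
    by metis
qed

end
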